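(* Let $\kappa,\lambda$ be regular cardinals with $\kappa^+<\lambda$, and let $S\subseteq\{\delta<\lambda:\operatorname{cf}\delta=\kappa\}$ be stationary in $\lambda$. Let $\langle c_\delta:\delta\in S\rangle$ be any sequence such that each $c_\delta\subseteq\delta$ is a club of $\delta$ of order type $\kappa$, and let $E'\subseteq\lambda$ be a club. Then there is a club $E\subseteq E'$ such that, setting $c'_\delta=\operatorname{Drop}(c_\delta,E)$ for $\delta\in S$, the following hold: (1) each $c'_\delta$ is a closed subset of $\delta$; (2) for every club $E''\subseteq\lambda$ the set $\{\delta\in S: c'_\delta\subseteq E'',\ \sup c'_\delta=\delta,\ \operatorname{otp}c'_\delta=\kappa\}$ is stationary in $\lambda$.
   Context: For a set of ordinals $c$ and an ordinal $\alpha$: if $c\cap\alpha\neq\emptyset$, $\operatorname{drop}(\alpha,c)=\sup(c\cap\alpha)$; if $c\cap\alpha=\emptyset$, $\operatorname{drop}(\alpha,c)$ is undefined. For sets of ordinals $X,c$, $\operatorname{Drop}(X,c)=\{\operatorname{drop}(\alpha,c):\alpha\in X\}$ (over those $\alpha$ for which it is defined). $\operatorname{otp}$ denotes order type. *)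

theory Defs
  imports Main "HOL-Library.Equipollence"
begin

text \<open>Ordinals are modelled as elements of an arbitrary well-ordered type 'a;
  an element x stands for the ordinal given by the order type of its initial
  segment, and the ordinal x is identified with the set of smaller elements.\<close>

definition osup :: "'a::wellorder set \<Rightarrow> 'a" where
  "osup A = (LEAST x. \<forall>y\<in>A. y \<le> x)"

definition ord_iso :: "'a::wellorder set \<Rightarrow> 'a set \<Rightarrow> bool" where
  "ord_iso A B \<longleftrightarrow> (\<exists>f. bij_betw f A B \<and> strict_mono_on A f)"

definition has_otp :: "'a::wellorder set \<Rightarrow> 'a \<Rightarrow> bool" where
  "has_otp X \<beta> \<longleftrightarrow> ord_iso X {..<\<beta>}"

definition cofinal_in :: "'a::wellorder \<Rightarrow> 'a set \<Rightarrow> bool" where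
  "cofinal_in \<delta> X \<longleftrightarrow> X \<subseteq> {..<\<delta>} \<and> (\<forall>x<\<delta>. \<exists>y\<in>X. x \<le> y)"

definition cf :: "'a::wellorder \<Rightarrow> 'a" where
  "cf \<delta> = (LEAST \<beta>. \<exists>X. cofinal_in \<delta> X \<and> has_otp X \<beta>)"

definition regular_cardinal :: "'a::wellorder \<Rightarrow> bool" where
  "regular_cardinal kap \<longleftrightarrow> infinite {..<kap} \<and> cf kap = kap"

definition closed_in_ord :: "'a::wellorder \<Rightarrow> 'a set \<Rightarrow> bool" where
  "closed_in_ord \<delta> C \<longleftrightarrow> C \<subseteq> {..<\<delta>} \<and>
     (\<forall>\<gamma><\<delta>. C \<inter> {..<\<gamma>} \<noteq> {} \<and> osup (C \<inter> {..<\<gamma>}) = \<gamma> \<longrightarrow> \<gamma> \<in> C)"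

definition club_in :: "'a::wellorder \<Rightarrow> 'a set \<Rightarrow> bool" where
  "club_in \<delta> C \<longleftrightarrow> closed_in_ord \<delta> C \<and> (\<forall>\<beta><\<delta>. \<exists>\<gamma>\<in>C. \<beta> \<le> \<gamma>)"

definition stationary_in :: "'a::wellorder \<Rightarrow> 'a set \<Rightarrow> bool" where
  "stationary_in lam S \<longleftrightarrow> S \<subseteq> {..<lam} \<and> (\<forall>C. club_in lam C \<longrightarrow> S \<inter> C \<noteq> {})"

definition drop_defined :: "'a::wellorder \<Rightarrow> 'a set \<Rightarrow> bool" where
  "drop_defined \<alpha> c \<longleftrightarrow> c \<inter> {..<\<alpha>} \<noteq> {}"

definition drop :: "'a::wellorder \<Rightarrow> 'a set \<Rightarrow> 'a" where
  "drop \<alpha> c = osup (c \<inter> {..<\<alpha>})"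

definition Drop :: "'a::wellorder set \<Rightarrow> 'a set \<Rightarrow> 'a set" where
  "Drop X c = {drop \<alpha> c | \<alpha>. \<alpha> \<in> X \<and> drop_defined \<alpha> c}"

end

theory Submission
  imports Defs
begin

text \<open>Suppose no club E \<subseteq> E' works. Then every such club E has a refuting club G E containing
  no \<delta> \<in> S for which Drop (c \<delta>) E is a subset of G E with supremum \<delta> and order type \<kappa>.
  Iterate G along the successor cardinal \<mu> = csucc \<kappa> < \<lambda>: the sets E i = E' \<inter> (\<Inter>j<i. G (E j)) form a decreasing sequence
  of clubs, because \<lambda> is regular and uncountable. Pick \<delta> \<in> S that is a limit point of E \<mu>.
  For each \<alpha> \<in> c \<delta> the value drop \<alpha> (E i) is non-increasing in i, hence eventually constant;
  since c \<delta> has only \<kappa> elements and \<mu> is regular, Drop (c \<delta>) (E i) is constant for all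
  i \<ge> b, for some b < \<mu>. For b < b' < \<mu> this gives
  Drop (c \<delta>) (E b) = Drop (c \<delta>) (E b') \<subseteq> E b' \<subseteq> G (E b), and also \<delta> \<in> E \<mu> \<subseteq> G (E b).
  As \<delta> is a limit point of E b, the set Drop (c \<delta>) (E b) is cofinal in \<delta>, so it has supremum \<delta>
  and order type cf \<delta> = \<kappa>: the refutation fails. Closedness of Drop (c \<delta>) E holds for every E,
  because drop is continuous in its first argument and c \<delta> is closed.\<close>

section \<open>Suprema and order types\<close>

lemma osup_upper: "\<forall>y\<in>A. y \<le> b \<Longrightarrow> y \<in> A \<Longrightarrow> y \<le> osup A"
  unfolding osup_def by (rule LeastI2[of "\<lambda>x. \<forall>y\<in>A. y \<le> x" b]) auto

lemma osup_least: "\<forall>y\<in>A. y \<le> b \<Longrightarrow> osup A \<le> b"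
  unfolding osup_def by (rule Least_le) auto

lemma osup_mono: "A \<subseteq> B \<Longrightarrow> \<forall>y\<in>B. y \<le> b \<Longrightarrow> osup A \<le> osup B"
  by (meson osup_least osup_upper subset_iff)

lemma less_osupD: "\<forall>y\<in>A. y \<le> b \<Longrightarrow> x < osup A \<Longrightarrow> \<exists>y\<in>A. x < y"
  by (meson not_le osup_least)

lemma osup_UN:
  assumes bound: "\<forall>a\<in>A. \<forall>y\<in>F a. y \<le> b"
  shows "osup (\<Union>a\<in>A. F a) = osup (osup ` F ` A)"
proof (rule antisym)
  have sup_le: "\<forall>z\<in>osup ` F ` A. z \<le> b" using bound osup_least by blast
  have UN_le: "\<forall>y\<in>(\<Union>a\<in>A. F a). y \<le> b" using bound by blast
  have "y \<le> osup (osup ` F ` A)" if "a \<in> A" "y \<in> F a" for a y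
  proof -
    have "y \<le> osup (F a)" using bound that by (intro osup_upper) auto
    also have "\<dots> \<le> osup (osup ` F ` A)" using sup_le that(1) by (intro osup_upper) auto
    finally show ?thesis .
  qed
  then show "osup (\<Union>a\<in>A. F a) \<le> osup (osup ` F ` A)" by (intro osup_least) blast
  have "osup (F a) \<le> osup (\<Union>a\<in>A. F a)" if "a \<in> A" for a
    using that UN_le by (intro osup_mono) auto
  then show "osup (osup ` F ` A) \<le> osup (\<Union>a\<in>A. F a)" by (intro osup_least) blast
qed

lemma osup_cofinal:
  assumes "cofinal_in d X" and "\<forall>x<d. \<exists>y<d. x < y"
  shows "osup X = d"
proof (rule antisym)
  have bound: "\<forall>y\<in>X. y \<le> d" using assms(1) unfolding cofinal_in_def by auto
  then show "osup X \<le> d" by (rule osup_least)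
  show "d \<le> osup X"
  proof (rule ccontr)
    assume "\<not> d \<le> osup X"
    then obtain y where "y < d" "osup X < y" using assms(2) by (meson not_le)
    then obtain z where "z \<in> X" "y \<le> z" using assms(1) unfolding cofinal_in_def by blast
    then show False using \<open>osup X < y\<close> osup_upper[OF bound] by (meson leD less_le_trans)
  qed
qed

lemma osup_no_max_less:
  assumes "\<forall>a\<in>A. a \<le> b" "\<forall>a\<in>A. \<exists>a'\<in>A. a < a'" "a \<in> A"
  shows "a < osup A"
proof -
  obtain a' where a': "a' \<in> A" "a < a'" using assms(2,3) by blast
  have "a' \<le> osup A" using osup_upper[OF assms(1) a'(1)] .
  then show ?thesis by (rule less_le_trans[OF a'(2)])
qed

lemma ord_iso_image: "strict_mono_on A f \<Longrightarrow> ord_iso A (f ` A)"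
  unfolding ord_iso_def by (meson bij_betw_imageI strict_mono_on_imp_inj_on)

lemma ord_iso_sym:
  assumes "ord_iso A B"
  shows "ord_iso B A"
proof -
  obtain f where f: "bij_betw f A B" "strict_mono_on A f" using assms ord_iso_def by blast
  let ?g = "the_inv_into A f"
  have g: "bij_betw ?g B A" using f(1) bij_betw_the_inv_into by blast
  have "strict_mono_on B ?g"
  proof (rule strict_mono_onI)
    fix x y assume xy: "x \<in> B" "y \<in> B" "x < y"
    have "?g x \<in> A" "?g y \<in> A" using xy g by (meson bij_betwE)+
    moreover have "f (?g x) = x" "f (?g y) = y" using xy f(1) by (simp_all add: f_the_inv_into_f_bij_betw)
    ultimately show "?g x < ?g y" using strict_mono_on_less[OF f(2)] xy(3) by metis
  qed
  then show ?thesis using g unfolding ord_iso_def by blast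
qed

lemma ord_iso_trans:
  assumes "ord_iso A B" "ord_iso B C"
  shows "ord_iso A C"
proof -
  obtain f where f: "bij_betw f A B" "strict_mono_on A f" using assms ord_iso_def by blast
  obtain g where g: "bij_betw g B C" "strict_mono_on B g" using assms ord_iso_def by blast
  have "strict_mono_on A (g \<circ> f)"
    by (rule strict_mono_onI) (metis bij_betwE comp_apply f g strict_mono_onD)
  then show ?thesis using bij_betw_trans[OF f(1) g(1)] unfolding ord_iso_def by blast
qed

lemma ord_iso_subset: "ord_iso A B \<Longrightarrow> A' \<subseteq> A \<Longrightarrow> \<exists>B'\<subseteq>B. ord_iso A' B'"
  unfolding ord_iso_def by (metis bij_betw_def bij_betw_subset image_mono monotone_on_subset)

lemma strict_mono_on_lessThan_ge:
  fixes f :: "'a::wellorder \<Rightarrow> 'a"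
  assumes f: "strict_mono_on {..<b} f" and "x < b"
  shows "x \<le> f x"
proof (rule ccontr)
  assume "\<not> x \<le> f x"
  then have ex: "x < b \<and> f x < x" using assms(2) by simp
  define m where "m = (LEAST x. x < b \<and> f x < x)"
  have m: "m < b" "f m < m" using LeastI[of "\<lambda>x. x < b \<and> f x < x", OF ex] m_def by auto
  then have "f (f m) < f m" using strict_mono_onD[OF f, of "f m" m] by simp
  then have "m \<le> f m" using m unfolding m_def by (simp add: Least_le)
  then show False using m by simp
qed

lemma has_otp_le_of_embedding:
  assumes X: "has_otp X b" and Y: "has_otp Y b'"
    and s: "strict_mono_on X s" "s ` X \<subseteq> Y"
  shows "b \<le> b'"
proof (rule ccontr)
  assume "\<not> b \<le> b'"
  have "ord_iso {..<b} (s ` X)"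
    using ord_iso_trans[OF ord_iso_sym ord_iso_image] X s(1) has_otp_def by blast
  moreover obtain B' where "B' \<subseteq> {..<b'}" "ord_iso (s ` X) B'"
    using ord_iso_subset[OF _ s(2)] Y has_otp_def by blast
  ultimately obtain f where f: "bij_betw f {..<b} B'" "strict_mono_on {..<b} f" "B' \<subseteq> {..<b'}"
    using ord_iso_trans ord_iso_def by blast
  have "b' < b" using \<open>\<not> b \<le> b'\<close> by simp
  then have "b' \<le> f b'" by (rule strict_mono_on_lessThan_ge[OF f(2)])
  moreover have "f b' < b'" using f \<open>b' < b\<close> by (auto dest: bij_betwE)
  ultimately show False by simp
qed

lemma has_otp_ord_iso: "ord_iso X Y \<Longrightarrow> has_otp Y b \<Longrightarrow> has_otp X b"
  unfolding has_otp_def using ord_iso_trans by blast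

lemma has_otp_lepoll: "has_otp X b \<Longrightarrow> X \<lesssim> {..<b}"
  unfolding has_otp_def ord_iso_def lepoll_def bij_betw_def by blast

lemma has_otp_finite: "has_otp X b \<Longrightarrow> finite X \<Longrightarrow> finite {..<b}"
  unfolding has_otp_def ord_iso_def using bij_betw_finite by blast

lemma wfrec_less_unfold:
  fixes F :: "('a::wellorder \<Rightarrow> 'b) \<Rightarrow> 'a \<Rightarrow> 'b"
  shows "wfrec {(x, y). x < y} F i = F (\<lambda>j. if j < i then wfrec {(x, y). x < y} F j else undefined) i"
  by (subst wfrec[OF wf]) (simp add: cut_def)

text \<open>rank_in X x is the order type of X \<inter> {..<x}; on X it is an isomorphism onto an initial segment.\<close>

definition rank_in :: "'a::wellorder set \<Rightarrow> 'a \<Rightarrow> 'a" where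
  "rank_in X = wfrec {(x, y). x < y} (\<lambda>r x. LEAST z. \<forall>y\<in>X. y < x \<longrightarrow> r y < z)"

lemma rank_in_eq: "rank_in X x = (LEAST z. \<forall>y\<in>X. y < x \<longrightarrow> rank_in X y < z)"
  unfolding rank_in_def by (subst wfrec_less_unfold) (rule arg_cong[where f = Least], auto)

lemma rank_in_le: "rank_in X x \<le> x"
proof (induction x rule: less_induct)
  case (less x)
  then have "\<forall>y\<in>X. y < x \<longrightarrow> rank_in X y < x" by (meson le_less_trans)
  then show ?case by (subst rank_in_eq) (rule Least_le)
qed

lemma rank_in_less:
  assumes "y \<in> X" "y < x"
  shows "rank_in X y < rank_in X x"
proof -
  have "\<forall>y\<in>X. y < x \<longrightarrow> rank_in X y < x" using rank_in_le by (meson le_less_trans)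
  then have "\<forall>y\<in>X. y < x \<longrightarrow> rank_in X y < rank_in X x" by (subst (2) rank_in_eq) (rule LeastI)
  then show ?thesis using assms by blast
qed

lemma strict_mono_on_rank_in: "strict_mono_on X (rank_in X)"
  by (rule strict_mono_onI) (rule rank_in_less)

lemma rank_in_downward_closed:
  assumes "x \<in> X" "z < rank_in X x"
  shows "z \<in> rank_in X ` X"
proof -
  have ex: "\<exists>y. y \<in> X \<and> z \<le> rank_in X y" using assms by (auto intro: less_imp_le)
  define y where "y = (LEAST y. y \<in> X \<and> z \<le> rank_in X y)"
  have y: "y \<in> X" "z \<le> rank_in X y" using LeastI_ex[OF ex] y_def by auto
  have "\<not> z < rank_in X y"
  proof
    assume "z < rank_in X y"
    then have "\<not> (\<forall>y'\<in>X. y' < y \<longrightarrow> rank_in X y' < z)"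
      using not_less_Least[of z "\<lambda>z. \<forall>y'\<in>X. y' < y \<longrightarrow> rank_in X y' < z"] rank_in_eq[of X y] by simp
    then obtain y' where "y' \<in> X" "y' < y" "z \<le> rank_in X y'" by (auto simp: not_less)
    then show False using y_def not_less_Least by blast
  qed
  then show ?thesis using y by (metis image_eqI order_le_less)
qed

lemma has_otp_exists:
  assumes "X \<subseteq> {..<g}"
  shows "\<exists>b\<le>g. has_otp X b"
proof -
  let ?I = "rank_in X ` X"
  have g: "g \<notin> ?I" using assms rank_in_le by (fastforce simp: not_le[symmetric])
  define b where "b = (LEAST b. b \<notin> ?I)"
  have b: "b \<notin> ?I" "b \<le> g" using LeastI[of "\<lambda>b. b \<notin> ?I", OF g] Least_le[of "\<lambda>b. b \<notin> ?I", OF g] b_def by auto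
  have "?I \<subseteq> {..<b}"
    using b(1) rank_in_downward_closed by (fastforce simp: not_less order_le_less)
  moreover have "{..<b} \<subseteq> ?I" using not_less_Least b_def by fastforce
  ultimately have "ord_iso X {..<b}" using ord_iso_image[OF strict_mono_on_rank_in] by (metis subset_antisym)
  then show ?thesis using b(2) has_otp_def by blast
qed

lemma mono_on_section:
  fixes f :: "'a::wellorder \<Rightarrow> 'b::linorder"
  assumes "mono_on A f"
  shows "\<exists>s. strict_mono_on (f ` A) s \<and> s ` f ` A \<subseteq> A"
proof -
  define s where "s x = (LEAST a. a \<in> A \<and> f a = x)" for x
  have s: "s x \<in> A \<and> f (s x) = x" if x: "x \<in> f ` A" for x
  proof -
    obtain a where "a \<in> A \<and> f a = x" using x by blast
    then show ?thesis unfolding s_def by (rule LeastI)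
  qed
  have "strict_mono_on (f ` A) s"
  proof (rule strict_mono_onI)
    fix x y assume xy: "x \<in> f ` A" "y \<in> f ` A" "x < y"
    show "s x < s y"
    proof (rule ccontr)
      assume "\<not> s x < s y"
      then have "s y \<le> s x" by simp
      then have "f (s y) \<le> f (s x)" using mono_onD[OF assms] s xy(1,2) by blast
      then show False using s xy by (metis leD)
    qed
  qed
  then show ?thesis using s by blast
qed

section \<open>Cofinality, limit points and clubs\<close>

lemma cf_le: "cofinal_in d X \<Longrightarrow> has_otp X b \<Longrightarrow> cf d \<le> b"
  unfolding cf_def by (rule Least_le) blast

lemma limit_of_infinite_cf:
  assumes "infinite {..<cf d}" "x < d"
  shows "\<exists>y<d. x < y"
proof (rule ccontr)
  assume "\<not> (\<exists>y<d. x < y)"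
  then have "cofinal_in d {x}" using assms(2) unfolding cofinal_in_def by (auto simp: not_less) (meson leD)
  moreover obtain b where "has_otp {x} b" using has_otp_exists[of "{x}" d] assms(2) by auto
  ultimately have "finite {..<cf d}"
    using cf_le has_otp_finite by (metis finite.emptyI finite_insert finite_subset lessThan_subset_iff)
  then show False using assms(1) by simp
qed

lemma regular_bounded:
  assumes cf: "cf lam = lam" and "i < lam" and h: "\<forall>j<i. h j < lam"
  shows "\<exists>b<lam. \<forall>j<i. h j < b"
proof (rule ccontr)
  assume "\<not> ?thesis"
  then have unbounded: "\<forall>b<lam. \<exists>j<i. b \<le> h j" by (meson not_le)
  \<comment> \<open>the indices at which h reaches a new record carry a cofinal strictly increasing subsequence\<close>
  define R where "R = {x. x < i \<and> (\<forall>y<x. h y < h x)}"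
  have smo: "strict_mono_on R h" by (rule strict_mono_onI) (auto simp: R_def)
  have "cofinal_in lam (h ` R)"
    unfolding cofinal_in_def
  proof (intro conjI allI impI)
    show "h ` R \<subseteq> {..<lam}" using h R_def by auto
    fix x assume "x < lam"
    then have ex: "\<exists>j. j < i \<and> x \<le> h j" using unbounded by blast
    define k where "k = (LEAST j. j < i \<and> x \<le> h j)"
    have k: "k < i" "x \<le> h k" using LeastI_ex[OF ex] k_def by auto
    have "\<forall>y<k. h y < h k" using k not_less_Least[of _ "\<lambda>j. j < i \<and> x \<le> h j"] k_def
      by (metis dual_order.strict_trans not_le_imp_less order.trans)
    then have "k \<in> R" using k R_def by auto
    then show "\<exists>y\<in>h ` R. x \<le> y" using k by blast
  qed
  moreover obtain r where r: "r \<le> i" "has_otp R r" using has_otp_exists[of R i] R_def by auto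
  ultimately have "cf lam \<le> r" using cf_le has_otp_ord_iso[OF ord_iso_sym[OF ord_iso_image[OF smo]]] by blast
  then show False using cf r \<open>i < lam\<close> by simp
qed

lemma regular_bounded_nat_seq:
  fixes bs :: "nat \<Rightarrow> 'a::wellorder"
  assumes cf: "cf lam = lam" and k: "k < lam" "infinite {..<k}"
    and bs: "strict_mono bs" "\<forall>n. bs n < lam"
  shows "\<exists>b<lam. \<forall>n. bs n < b"
proof (rule ccontr)
  assume "\<not> ?thesis"
  then have "cofinal_in lam (range bs)" using bs(2) unfolding cofinal_in_def by (auto simp: not_le) (meson not_le)
  moreover obtain r where r: "r \<le> lam" "has_otp (range bs) r" using has_otp_exists[of "range bs" lam] bs(2) by auto
  ultimately have "r = lam" using cf_le cf by (metis antisym)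
  then obtain f where f: "bij_betw f {..<lam} (range bs)" "strict_mono_on {..<lam} f"
    using r ord_iso_sym has_otp_def ord_iso_def by blast
  \<comment> \<open>an isomorphism of lam onto an \<omega>-sequence maps the infinite segment {..<k} below some bs N\<close>
  obtain N where N: "f k = bs N" using f(1) k(1) by (meson bij_betwE lessThan_iff rangeE)
  have "f ` {..<k} \<subseteq> bs ` {..<N}"
  proof
    fix v assume "v \<in> f ` {..<k}"
    then obtain x where x: "x < k" "v = f x" by auto
    moreover obtain m where m: "f x = bs m" using f(1) x k(1) by (meson bij_betwE lessThan_iff order.strict_trans rangeE)
    moreover have "f x < f k" using strict_mono_onD[OF f(2)] x k(1) by auto
    ultimately have "m < N" using N strict_mono_less[OF bs(1)] by metis
    then show "v \<in> bs ` {..<N}" using x m by auto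
  qed
  then have "finite (f ` {..<k})" using finite_subset by blast
  moreover have "inj_on f {..<k}"
    using f(1) k(1) bij_betw_def inj_on_subset by (metis lessThan_subset_iff less_imp_le)
  ultimately show False using k(2) finite_image_iff by blast
qed

definition limit_point :: "'a::wellorder set \<Rightarrow> 'a \<Rightarrow> bool" where
  "limit_point C g \<longleftrightarrow> C \<inter> {..<g} \<noteq> {} \<and> osup (C \<inter> {..<g}) = g"

lemma closed_in_ord_iff: "closed_in_ord d C \<longleftrightarrow> C \<subseteq> {..<d} \<and> (\<forall>g<d. limit_point C g \<longrightarrow> g \<in> C)"
  unfolding closed_in_ord_def limit_point_def by blast

lemma closed_in_ord_limit_point: "closed_in_ord d C \<Longrightarrow> g < d \<Longrightarrow> limit_point C g \<Longrightarrow> g \<in> C"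
  unfolding closed_in_ord_iff by blast

lemma club_in_limit_point: "club_in d C \<Longrightarrow> g < d \<Longrightarrow> limit_point C g \<Longrightarrow> g \<in> C"
  unfolding club_in_def using closed_in_ord_limit_point by blast

lemma club_in_subset: "club_in d C \<Longrightarrow> C \<subseteq> {..<d}"
  unfolding club_in_def closed_in_ord_def by blast

lemma club_in_unbounded: "club_in d C \<Longrightarrow> b < d \<Longrightarrow> \<exists>x\<in>C. b \<le> x \<and> x < d"
  unfolding club_in_def closed_in_ord_def by blast

lemma limit_point_mono:
  assumes "A \<subseteq> B" "limit_point A g"
  shows "limit_point B g"
proof -
  have "osup (A \<inter> {..<g}) \<le> osup (B \<inter> {..<g})" using assms(1) by (intro osup_mono[of _ _ g]) auto
  moreover have "osup (B \<inter> {..<g}) \<le> g" by (rule osup_least) auto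
  ultimately show ?thesis using assms unfolding limit_point_def by auto
qed

lemma limit_point_osup:
  assumes "A \<subseteq> C" "A \<noteq> {}" "\<forall>a\<in>A. a \<le> b" and no_max: "\<forall>a\<in>A. \<exists>a'\<in>A. a < a'"
  shows "limit_point C (osup A)"
proof -
  let ?s = "osup A"
  have sub: "A \<subseteq> C \<inter> {..<?s}" using assms(1) osup_no_max_less[OF assms(3) no_max] by auto
  have "?s \<le> osup (C \<inter> {..<?s})" by (rule osup_mono[where b = ?s, OF sub]) auto
  moreover have "C \<inter> {..<?s} \<noteq> {}" using sub assms(2) by auto
  moreover have "osup (C \<inter> {..<?s}) \<le> ?s" by (rule osup_least) auto
  ultimately show ?thesis unfolding limit_point_def by simp
qed

lemma limit_point_osup_seq:
  fixes bs :: "nat \<Rightarrow> 'a::wellorder"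
  assumes bound: "\<forall>n. bs n \<le> ub" and meets: "\<forall>n. \<exists>x\<in>K. bs n \<le> x \<and> x < bs (Suc n)"
  shows "limit_point K (osup (range bs))"
proof -
  let ?g = "osup (range bs)"
  let ?A = "{x\<in>K. \<exists>n. bs n \<le> x \<and> x < bs (Suc n)}"
  have le_g: "bs n \<le> ?g" for n using bound by (intro osup_upper[of _ ub]) auto
  have "?A \<subseteq> {..<?g}" using le_g less_le_trans by blast
  then have "osup ?A \<le> osup (K \<inter> {..<?g})" by (intro osup_mono[of _ _ ?g]) auto
  moreover have "?g \<le> osup ?A"
  proof (rule osup_least, safe)
    fix n
    obtain x where x: "x \<in> K" "bs n \<le> x" "x < bs (Suc n)" using meets by blast
    have "\<forall>y\<in>?A. y \<le> ?g" using \<open>?A \<subseteq> {..<?g}\<close> by auto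
    then have "x \<le> osup ?A" using x by (intro osup_upper) auto
    then show "bs n \<le> osup ?A" using x(2) by simp
  qed
  moreover have "osup (K \<inter> {..<?g}) \<le> ?g" by (rule osup_least) auto
  moreover have "K \<inter> {..<?g} \<noteq> {}"
  proof -
    obtain x where "x \<in> K" "x < bs (Suc 0)" using meets by blast
    then show ?thesis using le_g[of "Suc 0"] by auto
  qed
  ultimately show ?thesis unfolding limit_point_def by simp
qed

locale uncountable_regular =
  fixes lam :: "'a::wellorder"
  assumes cf_lam: "cf lam = lam"
    and infinite_segment: "\<exists>k<lam. infinite {..<k}"
begin

lemma lam_limit: "x < lam \<Longrightarrow> \<exists>y<lam. x < y"
  using limit_of_infinite_cf infinite_segment cf_lam
  by (metis finite_subset lessThan_subset_iff less_imp_le)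

lemma bounded_nat_seq: "strict_mono (bs :: nat \<Rightarrow> 'a) \<Longrightarrow> \<forall>n. bs n < lam \<Longrightarrow> \<exists>b<lam. \<forall>n. bs n < b"
  using regular_bounded_nat_seq[OF cf_lam] infinite_segment by blast

lemma exists_bound_meeting_clubs:
  assumes "i < lam" and C: "\<forall>j<i. club_in lam (C j)" and E: "club_in lam E" and "e < lam"
  shows "\<exists>e'<lam. e < e' \<and> (\<exists>x\<in>E. e \<le> x \<and> x < e') \<and> (\<forall>j<i. \<exists>x\<in>C j. e \<le> x \<and> x < e')"
proof -
  have "\<forall>j. \<exists>x. j < i \<longrightarrow> x \<in> C j \<and> e \<le> x \<and> x < lam"
    using club_in_unbounded[OF _ \<open>e < lam\<close>] C by blast
  then obtain h where h: "\<forall>j<i. h j \<in> C j \<and> e \<le> h j \<and> h j < lam"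
    by (rule choice[THEN exE])
  obtain b where b: "b < lam" "\<forall>j<i. h j < b" using regular_bounded[OF cf_lam \<open>i < lam\<close>] h by blast
  obtain x where x: "x \<in> E" "e \<le> x" "x < lam" using club_in_unbounded[OF E \<open>e < lam\<close>] by blast
  obtain y where y: "y < lam" "x < y" using lam_limit[OF x(3)] by blast
  show ?thesis
    by (intro exI[of _ "max b y"]) (use b h x y in \<open>auto simp: less_max_iff_disj\<close>)
qed

lemma common_limit_point:
  assumes "i < lam" and C: "\<forall>j<i. club_in lam (C j)" and E: "club_in lam E" and "b < lam"
  shows "\<exists>g<lam. b \<le> g \<and> limit_point E g \<and> (\<forall>j<i. limit_point (C j) g)"
proof -
  have "\<forall>e. \<exists>e'. e < lam \<longrightarrow> e' < lam \<and> e < e' \<and>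
      (\<exists>x\<in>E. e \<le> x \<and> x < e') \<and> (\<forall>j<i. \<exists>x\<in>C j. e \<le> x \<and> x < e')"
    using exists_bound_meeting_clubs[OF assms(1-3)] by blast
  then obtain nx where nx_all: "\<forall>e. e < lam \<longrightarrow> nx e < lam \<and> e < nx e \<and>
      (\<exists>x\<in>E. e \<le> x \<and> x < nx e) \<and> (\<forall>j<i. \<exists>x\<in>C j. e \<le> x \<and> x < nx e)"
    by (rule choice[THEN exE])
  then have nx: "nx e < lam \<and> e < nx e \<and>
      (\<exists>x\<in>E. e \<le> x \<and> x < nx e) \<and> (\<forall>j<i. \<exists>x\<in>C j. e \<le> x \<and> x < nx e)" if "e < lam" for e
    using that by blast
  define bs where "bs n = (nx ^^ n) b" for n
  have bs_Suc: "bs (Suc n) = nx (bs n)" for n by (simp add: bs_def)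
  have bs_lt: "bs n < lam" for n by (induction n) (simp_all add: bs_def \<open>b < lam\<close> nx)
  have "strict_mono bs" using bs_lt nx bs_Suc by (simp add: strict_mono_Suc_iff)
  then obtain ub where ub: "ub < lam" "\<forall>n. bs n < ub" using bounded_nat_seq bs_lt by blast
  then have bs_le: "\<forall>n. bs n \<le> ub" by (simp add: less_imp_le)
  define g where "g = osup (range bs)"
  have "limit_point E g" unfolding g_def
    by (rule limit_point_osup_seq[OF bs_le]) (use nx bs_lt bs_Suc in metis)
  moreover have "limit_point (C j) g" if "j < i" for j unfolding g_def
    by (rule limit_point_osup_seq[OF bs_le]) (use nx bs_lt bs_Suc that in metis)
  moreover have "bs 0 \<le> g" unfolding g_def using bs_le by (intro osup_upper) auto
  then have "b \<le> g" by (simp add: bs_def)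
  moreover have "g < lam" using osup_least[of "range bs" ub] bs_le ub(1) g_def by auto
  ultimately show ?thesis by blast
qed

lemma club_in_INT:
  assumes "i < lam" and C: "\<forall>j<i. club_in lam (C j)" and E: "club_in lam E"
  shows "club_in lam (E \<inter> (\<Inter>j\<in>{..<i}. C j))"
proof -
  let ?I = "E \<inter> (\<Inter>j\<in>{..<i}. C j)"
  have "g \<in> ?I" if g: "g < lam" "limit_point ?I g" for g
  proof -
    have "g \<in> E" using club_in_limit_point[OF E g(1) limit_point_mono[OF _ g(2)]] by blast
    moreover have "g \<in> C j" if "j < i" for j
      using club_in_limit_point[OF _ g(1) limit_point_mono[OF _ g(2)]] C that by blast
    ultimately show ?thesis by blast
  qed
  then have "closed_in_ord lam ?I" using club_in_subset[OF E] closed_in_ord_iff by blast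
  moreover have "\<exists>g\<in>?I. b \<le> g" if "b < lam" for b
    using common_limit_point[OF assms that] club_in_limit_point C E by blast
  ultimately show ?thesis unfolding club_in_def by blast
qed

lemma club_in_Int:
  assumes "club_in lam A" "club_in lam B"
  shows "club_in lam (A \<inter> B)"
proof -
  obtain k where k: "k < lam" "{..<k} \<noteq> {}" using infinite_segment by force
  then show ?thesis using club_in_INT[OF k(1), of "\<lambda>_. B" A] assms by simp
qed

lemma club_in_limit_points:
  assumes E: "club_in lam E"
  shows "club_in lam {g. g < lam \<and> limit_point E g}"
proof -
  let ?A = "{g. g < lam \<and> limit_point E g}"
  have "?A \<subseteq> E" using club_in_limit_point[OF E] by blast
  then have "closed_in_ord lam ?A" unfolding closed_in_ord_iff using limit_point_mono by blast
  moreover have "\<exists>g\<in>?A. b \<le> g" if "b < lam" for b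
    using common_limit_point[OF that, of "\<lambda>_. E" E] E that by auto
  ultimately show ?thesis unfolding club_in_def by blast
qed

end

section \<open>The Drop operation\<close>

lemma Drop_eq_image: "Drop X E = (\<lambda>a. drop a E) ` {a\<in>X. drop_defined a E}"
  unfolding Drop_def by auto

lemma drop_le: "drop a E \<le> a"
  unfolding drop_def by (rule osup_least) auto

lemma drop_upper: "e \<in> E \<Longrightarrow> e < a \<Longrightarrow> e \<le> drop a E"
  unfolding drop_def by (rule osup_upper[of _ a]) auto

lemma drop_mono: "a \<le> a' \<Longrightarrow> drop a E \<le> drop a' E"
  unfolding drop_def by (rule osup_mono[of _ _ a']) auto

lemma drop_mono_set: "E1 \<subseteq> E2 \<Longrightarrow> drop a E1 \<le> drop a E2"
  unfolding drop_def by (rule osup_mono[of _ _ a]) auto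

lemma drop_osup:
  assumes "\<forall>a\<in>A. a \<le> b" "\<forall>a\<in>A. \<exists>a'\<in>A. a < a'"
  shows "drop (osup A) E = osup ((\<lambda>a. drop a E) ` A)"
proof -
  have "E \<inter> {..<osup A} = (\<Union>a\<in>A. E \<inter> {..<a})"
    using osup_no_max_less[OF assms] less_osupD[OF assms(1)] by fastforce
  then have "drop (osup A) E = osup (osup ` (\<lambda>a. E \<inter> {..<a}) ` A)"
    unfolding drop_def using osup_UN[of A "\<lambda>a. E \<inter> {..<a}" b] assms(1) by fastforce
  then show ?thesis by (simp add: image_image drop_def)
qed

lemma drop_mem:
  assumes "closed_in_ord d E" "a < d" "drop_defined a E"
  shows "drop a E \<in> E"
proof (rule ccontr)
  assume notin: "drop a E \<notin> E"
  have "E \<inter> {..<drop a E} = E \<inter> {..<a}"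
    using drop_le[of a E] drop_upper[of _ E a] notin by (fastforce simp: order_le_less)
  then have "limit_point E (drop a E)"
    using assms(3) unfolding limit_point_def drop_defined_def drop_def by simp
  moreover have "drop a E < d" using drop_le[of a E] assms(2) by (rule le_less_trans)
  ultimately show False using closed_in_ord_limit_point[OF assms(1)] notin by blast
qed

lemma Drop_subset_lessThan:
  assumes "X \<subseteq> {..<d}"
  shows "Drop X E \<subseteq> {..<d}"
proof
  fix x assume "x \<in> Drop X E"
  then obtain a where "a \<in> X" "x = drop a E" unfolding Drop_eq_image by blast
  then show "x \<in> {..<d}" using le_less_trans[OF drop_le] assms by blast
qed

lemma Drop_subset: "closed_in_ord d E \<Longrightarrow> X \<subseteq> {..<d} \<Longrightarrow> Drop X E \<subseteq> E"
  unfolding Drop_eq_image using drop_mem by blast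

lemma closed_in_ord_Drop:
  assumes c: "club_in d c" and lim: "\<forall>x<d. \<exists>y<d. x < y"
  shows "closed_in_ord d (Drop c E)"
  unfolding closed_in_ord_iff
proof (intro conjI allI impI)
  let ?f = "\<lambda>a. drop a E"
  have cd: "c \<subseteq> {..<d}" using club_in_subset[OF c] .
  then show "Drop c E \<subseteq> {..<d}" by (rule Drop_subset_lessThan)
  fix g assume "g < d" and g: "limit_point (Drop c E) g"
  define A where "A = {a\<in>c. drop_defined a E \<and> ?f a < g}"
  have A_image: "Drop c E \<inter> {..<g} = ?f ` A" unfolding Drop_eq_image A_def by auto
  then have "A \<noteq> {}" and g_osup: "osup (?f ` A) = g" using g unfolding limit_point_def by auto
  have A_bound: "\<forall>a\<in>A. a \<le> d" using cd A_def by auto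
  have no_max: "\<forall>a\<in>A. \<exists>a'\<in>A. a < a'"
  proof (rule ccontr)
    assume "\<not> ?thesis"
    then obtain a where a: "a \<in> A" "\<forall>a'\<in>A. a' \<le> a" by (auto simp: not_less)
    then have "osup (?f ` A) \<le> ?f a" using drop_mono by (intro osup_least) blast
    then show False using a(1) g_osup A_def by auto
  qed
  define a where "a = osup A"
  have fa: "?f a = g" unfolding a_def using drop_osup[OF A_bound no_max] g_osup by simp
  obtain a1 where a1: "a1 \<in> A" using \<open>A \<noteq> {}\<close> by blast
  have "a1 < a" unfolding a_def using osup_no_max_less[OF A_bound no_max a1] .
  then have defined: "drop_defined a E" using a1 unfolding A_def drop_defined_def by auto
  have "a \<le> d" unfolding a_def using A_bound by (rule osup_least)
  then consider "a < d" | "a = d" by fastforce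
  then show "g \<in> Drop c E"
  proof cases
    case 1
    have "limit_point c a" unfolding a_def
      using limit_point_osup[OF _ \<open>A \<noteq> {}\<close> A_bound no_max] A_def by blast
    then have "a \<in> c" using club_in_limit_point[OF c 1] by blast
    then show ?thesis using fa defined unfolding Drop_eq_image by blast
  next
    case 2
    \<comment> \<open>then E has no point in [g, d), so any a0 \<in> c above g drops to g as well\<close>
    obtain y where "y < d" "g < y" using lim \<open>g < d\<close> by blast
    then obtain a0 where a0: "a0 \<in> c" "g < a0" "a0 < d"
      using club_in_unbounded[OF c] by (meson less_le_trans)
    have "e < a0" if "e \<in> E" "e < d" for e
      using drop_upper[OF that] fa 2 a0(2) by (metis le_less_trans)
    then have "E \<inter> {..<a0} = E \<inter> {..<d}" using a0(3) by auto
    then have "?f a0 = g" "drop_defined a0 E"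
      using fa defined 2 unfolding drop_def drop_defined_def by simp_all
    then show ?thesis using a0(1) unfolding Drop_eq_image by blast
  qed
qed

lemma cofinal_in_Drop:
  assumes E: "limit_point E d" and c: "club_in d c" and lim: "\<forall>x<d. \<exists>y<d. x < y"
  shows "cofinal_in d (Drop c E)"
  unfolding cofinal_in_def
proof (intro conjI allI impI)
  show "Drop c E \<subseteq> {..<d}" using Drop_subset_lessThan[OF club_in_subset[OF c]] .
  fix x assume "x < d"
  then have "x < osup (E \<inter> {..<d})" using E unfolding limit_point_def by simp
  moreover have "\<forall>y\<in>E \<inter> {..<d}. y \<le> d" by auto
  ultimately obtain e where e: "e \<in> E" "e < d" "x < e" using less_osupD by blast
  obtain y where "y < d" "e < y" using lim e(2) by blast
  then obtain a where a: "a \<in> c" "e < a" using club_in_unbounded[OF c] by (meson less_le_trans)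
  then have "drop a E \<in> Drop c E" using e(1) unfolding Drop_eq_image drop_defined_def by blast
  moreover have "x \<le> drop a E" using drop_upper[OF e(1) a(2)] e(3) by simp
  ultimately show "\<exists>y\<in>Drop c E. x \<le> y" by blast
qed

lemma has_otp_Drop_le:
  assumes "has_otp c kap" "has_otp (Drop c E) b"
  shows "b \<le> kap"
proof -
  have "mono_on {a\<in>c. drop_defined a E} (\<lambda>a. drop a E)" by (rule mono_onI) (rule drop_mono)
  then obtain s where "strict_mono_on (Drop c E) s" "s ` Drop c E \<subseteq> {a\<in>c. drop_defined a E}"
    unfolding Drop_eq_image by (blast dest: mono_on_section)
  then show ?thesis using has_otp_le_of_embedding[OF assms(2,1)] by blast
qed

lemma Drop_at_limit_point:
  assumes E: "limit_point E d" and c: "club_in d c" "has_otp c kap" and "cf d = kap"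
    and lim: "\<forall>x<d. \<exists>y<d. x < y"
  shows "osup (Drop c E) = d" and "has_otp (Drop c E) kap"
proof -
  have cof: "cofinal_in d (Drop c E)" using cofinal_in_Drop[OF E c(1) lim] .
  then show "osup (Drop c E) = d" using osup_cofinal lim by blast
  obtain b where b: "has_otp (Drop c E) b"
    using has_otp_exists[OF Drop_subset_lessThan[OF club_in_subset[OF c(1)]]] by blast
  have "kap \<le> b" using cf_le[OF cof b] \<open>cf d = kap\<close> by simp
  moreover have "b \<le> kap" using has_otp_Drop_le[OF c(2) b] .
  ultimately show "has_otp (Drop c E) kap" using b by simp
qed

section \<open>Cardinal successors\<close>

text \<open>csucc kap is the cardinal successor of kap only if some m with {..<kap} \<prec> {..<m} exists;
  otherwise it is the LEAST of an empty predicate.\<close>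

definition csucc :: "'a::wellorder \<Rightarrow> 'a" where
  "csucc kap = (LEAST m. {..<kap} \<prec> {..<m})"

lemma less_of_lesspoll_lessThan:
  fixes kap m :: "'a::wellorder"
  assumes "{..<kap} \<prec> {..<m}"
  shows "kap < m"
proof (rule ccontr)
  assume "\<not> kap < m"
  then have "m \<le> kap" by simp
  then have "{..<m} \<lesssim> {..<kap}" by (intro subset_imp_lepoll) (auto intro: less_le_trans)
  then show False using assms lepoll_antisym unfolding lesspoll_def by blast
qed

lemma csucc_le:
  fixes kap m :: "'a::wellorder"
  shows "{..<kap} \<prec> {..<m} \<Longrightarrow> csucc kap \<le> m"
  unfolding csucc_def by (rule Least_le)

lemma lesspoll_csucc:
  fixes kap m :: "'a::wellorder"
  shows "{..<kap} \<prec> {..<m} \<Longrightarrow> {..<kap} \<prec> {..<csucc kap}"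
  unfolding csucc_def by (rule LeastI_ex) blast

lemma atMost_lepoll_of_less_csucc:
  assumes "infinite {..<kap}" "x < csucc kap"
  shows "{..x} \<lesssim> {..<kap}"
proof (cases "x < kap")
  case True
  then show ?thesis by (intro subset_imp_lepoll) auto
next
  case False
  then have "{..<kap} \<lesssim> {..<x}" by (intro subset_imp_lepoll) auto
  moreover have "\<not> {..<kap} \<prec> {..<x}" using assms(2) csucc_le leD by blast
  ultimately have eq: "{..<kap} \<approx> {..<x}" unfolding lesspoll_def by blast
  then have "infinite {..<x}" using assms(1) eqpoll_finite_iff by blast
  have "{..x} = insert x {..<x}" by auto
  also have "\<dots> \<approx> {..<x}" using \<open>infinite {..<x}\<close> by (rule infinite_insert_eqpoll)
  also have "\<dots> \<approx> {..<kap}" using eq by (rule eqpoll_sym)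
  finally show ?thesis by (rule eqpoll_imp_lepoll)
qed

lemma csucc_bounded:
  fixes kap m :: "'a::wellorder" and g :: "'b \<Rightarrow> 'a"
  assumes kap: "infinite {..<kap}" "{..<kap} \<prec> {..<m}"
    and A: "A \<lesssim> {..<kap}" and g: "\<forall>x\<in>A. g x < csucc kap"
  shows "\<exists>b<csucc kap. \<forall>x\<in>A. g x < b"
proof (rule ccontr)
  assume "\<not> ?thesis"
  then have "\<forall>b<csucc kap. \<exists>x\<in>A. b \<le> g x" by (meson not_less)
  then have "{..<csucc kap} \<subseteq> (\<Union>x\<in>A. {..g x})" by fastforce
  then have "{..<csucc kap} \<lesssim> (\<Union>x\<in>A. {..g x})" by (rule subset_imp_lepoll)
  also have "\<dots> \<lesssim> (\<Union>x\<in>A. {x} \<times> {..<kap})"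
  proof (rule UN_lepoll_UN)
    fix x assume "x \<in> A"
    then have "{..g x} \<lesssim> {..<kap}" using atMost_lepoll_of_less_csucc kap(1) g by blast
    also have "{..<kap} \<approx> {x} \<times> {..<kap}" by (rule eqpoll_sym[OF times_singleton_eqpoll])
    finally show "{..g x} \<lesssim> {x} \<times> {..<kap}" .
  qed (auto simp: pairwise_def disjnt_def)
  also have "(\<Union>x\<in>A. {x} \<times> {..<kap}) = A \<times> {..<kap}" by auto
  also have "\<dots> \<lesssim> {..<kap} \<times> {..<kap}" using A by (rule times_lepoll_mono) simp
  also have "\<dots> \<approx> {..<kap}"
    using kap(1) eqpoll_iff_card_of_ordIso card_of_Times_same_infinite by blast
  finally have "{..<csucc kap} \<lesssim> {..<kap}" .
  then show False using lesspoll_csucc[OF kap(2)] lepoll_antisym unfolding lesspoll_def by blast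
qed

lemma csucc_limit:
  fixes kap m :: "'a::wellorder"
  assumes "infinite {..<kap}" "{..<kap} \<prec> {..<m}" "b < csucc kap"
  shows "\<exists>b'. b < b' \<and> b' < csucc kap"
proof -
  obtain b' where "b' < csucc kap" "\<forall>x\<in>{..<kap}. b < b'"
    using csucc_bounded[OF assms(1,2) lepoll_refl, of "\<lambda>_. b"] assms(3) by blast
  moreover have "{..<kap} \<noteq> {}" using assms(1) by auto
  ultimately show ?thesis by blast
qed

lemma antitone_eventually_constant:
  fixes f :: "'a::wellorder \<Rightarrow> 'b::wellorder"
  assumes anti: "\<And>j k. j \<le> k \<Longrightarrow> k < mu \<Longrightarrow> f k \<le> f j" and "j0 < mu"
  shows "\<exists>j<mu. \<forall>k. j \<le> k \<longrightarrow> k < mu \<longrightarrow> f k = f j"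
proof -
  have ex: "\<exists>y. \<exists>k<mu. f k = y" using \<open>j0 < mu\<close> by blast
  define m where "m = (LEAST y. \<exists>k<mu. f k = y)"
  obtain j where j: "j < mu" "f j = m" using LeastI_ex[OF ex] m_def by blast
  have "f k = f j" if "j \<le> k" "k < mu" for k
  proof -
    have "f k \<le> f j" using anti that by blast
    moreover have "m \<le> f k" unfolding m_def using that(2) by (blast intro: Least_le)
    ultimately show ?thesis using j by simp
  qed
  then show ?thesis using j by blast
qed

lemma drop_eventually_constant:
  fixes mu :: "'a::wellorder" and Es :: "'a \<Rightarrow> 'b::wellorder set"
  assumes decr: "\<And>j k. j \<le> k \<Longrightarrow> k < mu \<Longrightarrow> Es k \<subseteq> Es j" and "j0 < mu"
  shows "\<exists>t<mu. \<forall>k. t \<le> k \<longrightarrow> k < mu \<longrightarrow>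
           (drop_defined a (Es k) \<longleftrightarrow> drop_defined a (Es t)) \<and> drop a (Es k) = drop a (Es t)"
proof -
  obtain t2 where t2: "t2 < mu" "\<forall>k. t2 \<le> k \<longrightarrow> k < mu \<longrightarrow> drop a (Es k) = drop a (Es t2)"
    using antitone_eventually_constant[of mu "\<lambda>k. drop a (Es k)", OF drop_mono_set[OF decr] \<open>j0 < mu\<close>]
    by blast
  obtain t1 where t1: "t1 < mu" "\<forall>k. t1 \<le> k \<longrightarrow> k < mu \<longrightarrow> (drop_defined a (Es k) \<longleftrightarrow> drop_defined a (Es t1))"
  proof (cases "\<exists>t<mu. \<not> drop_defined a (Es t)")
    case True
    then obtain t where "t < mu" "\<not> drop_defined a (Es t)" by blast
    moreover have "\<not> drop_defined a (Es k)" if "t \<le> k" "k < mu" for k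
      using decr[OF that] \<open>\<not> drop_defined a (Es t)\<close> unfolding drop_defined_def by blast
    ultimately show ?thesis using that by blast
  next
    case False
    then show ?thesis using that \<open>j0 < mu\<close> by blast
  qed
  show ?thesis
  proof (intro exI conjI allI impI)
    show "max t1 t2 < mu" using t1(1) t2(1) by simp
    fix k assume "max t1 t2 \<le> k" "k < mu"
    then show "drop_defined a (Es k) \<longleftrightarrow> drop_defined a (Es (max t1 t2))"
      and "drop a (Es k) = drop a (Es (max t1 t2))"
      using t1 t2 \<open>max t1 t2 < mu\<close> by (metis max.bounded_iff max.cobounded1 max.cobounded2)+
  qed
qed

lemma Drop_eventually_constant:
  fixes kap m :: "'a::wellorder"
  assumes kap: "infinite {..<kap}" "{..<kap} \<prec> {..<m}" and c: "c \<lesssim> {..<kap}"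
    and decr: "\<And>j k. j \<le> k \<Longrightarrow> k < csucc kap \<Longrightarrow> Es k \<subseteq> Es j"
  shows "\<exists>b<csucc kap. \<forall>k. b \<le> k \<longrightarrow> k < csucc kap \<longrightarrow> Drop c (Es k) = Drop c (Es b)"
proof -
  let ?mu = "csucc kap"
  have "kap < ?mu" using less_of_lesspoll_lessThan[OF lesspoll_csucc[OF kap(2)]] .
  then have "\<forall>a. \<exists>t<?mu. \<forall>k. t \<le> k \<longrightarrow> k < ?mu \<longrightarrow>
      (drop_defined a (Es k) \<longleftrightarrow> drop_defined a (Es t)) \<and> drop a (Es k) = drop a (Es t)"
    using drop_eventually_constant[OF decr] by (intro allI)
  then obtain t where t: "\<forall>a. t a < ?mu \<and> (\<forall>k. t a \<le> k \<longrightarrow> k < ?mu \<longrightarrow>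
      (drop_defined a (Es k) \<longleftrightarrow> drop_defined a (Es (t a))) \<and> drop a (Es k) = drop a (Es (t a)))"
    by (rule choice[THEN exE])
  obtain b where b: "b < ?mu" "\<forall>a\<in>c. t a < b" using csucc_bounded[OF kap c, of t] t by blast
  have "Drop c (Es k) = Drop c (Es b)" if "b \<le> k" "k < ?mu" for k
  proof -
    have "t a \<le> b" "t a \<le> k" if "a \<in> c" for a using b(2) that \<open>b \<le> k\<close> by (auto intro: less_imp_le)
    then have "\<forall>a\<in>c. (drop_defined a (Es k) \<longleftrightarrow> drop_defined a (Es b)) \<and> drop a (Es k) = drop a (Es b)"
      using t b(1) that(2) by metis
    then show ?thesis unfolding Drop_eq_image by (intro image_cong) auto
  qed
  then show ?thesis using b(1) by blast
qed

section \<open>Guessing clubs\<close>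

context uncountable_regular
begin

lemma decreasing_club_chain:
  assumes "mu < lam" and E': "club_in lam E'"
    and G: "\<And>E. club_in lam E \<Longrightarrow> E \<subseteq> E' \<Longrightarrow> club_in lam (G E)"
  obtains Es :: "'a \<Rightarrow> 'a set"
  where "\<And>j k. j \<le> k \<Longrightarrow> Es k \<subseteq> Es j" "\<And>i j. j < i \<Longrightarrow> Es i \<subseteq> G (Es j)"
    "\<And>i. Es i \<subseteq> E'" "\<And>i. i \<le> mu \<Longrightarrow> club_in lam (Es i)"
proof
  define Es :: "'a \<Rightarrow> 'a set" where "Es = wfrec {(x, y). x < y} (\<lambda>r i. E' \<inter> (\<Inter>j\<in>{..<i}. G (r j)))"
  have Es_eq: "Es i = E' \<inter> (\<Inter>j\<in>{..<i}. G (Es j))" for i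
    unfolding Es_def by (subst wfrec_less_unfold) simp
  show "Es k \<subseteq> Es j" if "j \<le> k" for j k
    using that Es_eq[of j] Es_eq[of k] by (auto intro: less_le_trans)
  show "Es i \<subseteq> G (Es j)" if "j < i" for i j
    using that Es_eq[of i] by auto
  show Es_E': "Es i \<subseteq> E'" for i using Es_eq[of i] by blast
  show "club_in lam (Es i)" if "i \<le> mu" for i
    using that
  proof (induction i rule: less_induct)
    case (less i)
    have "club_in lam (G (Es j))" if "j < i" for j
    proof -
      have "club_in lam (Es j)" using less.IH[OF that] that less.prems by simp
      then show ?thesis using G Es_E' by blast
    qed
    moreover have "i < lam" using less.prems \<open>mu < lam\<close> by (rule le_less_trans)
    ultimately have "club_in lam (E' \<inter> (\<Inter>j\<in>{..<i}. G (Es j)))"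
      using club_in_INT[of i "\<lambda>j. G (Es j)", OF _ _ E'] by blast
    then show ?case using Es_eq[of i] by simp
  qed
qed

lemma no_refuting_club_strategy:
  fixes kap m :: 'a
  assumes kap: "infinite {..<kap}" "{..<kap} \<prec> {..<m}" "m < lam"
    and S: "S \<subseteq> {\<delta>. \<delta> < lam \<and> cf \<delta> = kap}" "stationary_in lam S"
    and c: "\<forall>\<delta>\<in>S. club_in \<delta> (c \<delta>) \<and> has_otp (c \<delta>) kap"
    and E': "club_in lam E'"
    and G: "\<And>E. club_in lam E \<Longrightarrow> E \<subseteq> E' \<Longrightarrow> club_in lam (G E) \<and>
              (\<forall>\<delta>\<in>S \<inter> G E. \<not> (Drop (c \<delta>) E \<subseteq> G E \<and> osup (Drop (c \<delta>) E) = \<delta> \<and>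
                                   has_otp (Drop (c \<delta>) E) kap))"
  shows False
proof -
  let ?mu = "csucc kap"
  have "?mu < lam" using csucc_le[OF kap(2)] kap(3) by (rule le_less_trans)
  obtain Es where Es_decr: "\<And>j k. j \<le> k \<Longrightarrow> Es k \<subseteq> Es j"
    and Es_G: "\<And>i j. j < i \<Longrightarrow> Es i \<subseteq> G (Es j)" and Es_E': "\<And>i. Es i \<subseteq> E'"
    and Es_club: "\<And>i. i \<le> ?mu \<Longrightarrow> club_in lam (Es i)"
    using decreasing_club_chain[OF \<open>?mu < lam\<close> E'] G by metis
  obtain d where "d \<in> S" and d_lim: "limit_point (Es ?mu) d"
    using S(2) club_in_limit_points[OF Es_club[OF order_refl]] unfolding stationary_in_def by blast
  then have d: "d < lam" "cf d = kap" "club_in d (c d)" "has_otp (c d) kap" using S(1) c by auto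
  have d_limit: "\<forall>x<d. \<exists>y<d. x < y" using limit_of_infinite_cf d(2) kap(1) by blast
  have "\<exists>b<?mu. \<forall>k. b \<le> k \<longrightarrow> k < ?mu \<longrightarrow> Drop (c d) (Es k) = Drop (c d) (Es b)"
    by (rule Drop_eventually_constant[OF kap(1,2) has_otp_lepoll[OF d(4)]]) (erule Es_decr)
  then obtain b where b: "b < ?mu" "\<forall>k. b \<le> k \<longrightarrow> k < ?mu \<longrightarrow> Drop (c d) (Es k) = Drop (c d) (Es b)"
    by blast
  obtain b' where b': "b < b'" "b' < ?mu" using csucc_limit[OF kap(1,2) b(1)] by blast
  have "c d \<subseteq> {..<lam}" using club_in_subset[OF d(3)] d(1) by auto
  moreover have "closed_in_ord lam (Es b')" using Es_club[of b'] b'(2) unfolding club_in_def by simp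
  ultimately have "Drop (c d) (Es b') \<subseteq> Es b'" using Drop_subset by blast
  moreover have "Drop (c d) (Es b') = Drop (c d) (Es b)" using b(2) less_imp_le[OF b'(1)] b'(2) by blast
  ultimately have "Drop (c d) (Es b) \<subseteq> G (Es b)" using Es_G[OF b'(1)] by simp
  moreover have "d \<in> G (Es b)"
    using club_in_limit_point[OF Es_club d(1) d_lim] Es_G[OF b(1)] by blast
  moreover have "limit_point (Es b) d" using limit_point_mono[OF Es_decr d_lim] b(1) by simp
  then have "osup (Drop (c d) (Es b)) = d" "has_otp (Drop (c d) (Es b)) kap"
    using Drop_at_limit_point[OF _ d(3,4,2) d_limit] by auto
  ultimately show False using G[OF Es_club Es_E'] \<open>d \<in> S\<close> b(1) by (meson IntI order_less_imp_le)
qed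

lemma exists_club_Drop_guessing:
  fixes kap m :: 'a
  assumes kap: "infinite {..<kap}" "{..<kap} \<prec> {..<m}" "m < lam"
    and S: "S \<subseteq> {\<delta>. \<delta> < lam \<and> cf \<delta> = kap}" "stationary_in lam S"
    and c: "\<forall>\<delta>\<in>S. club_in \<delta> (c \<delta>) \<and> has_otp (c \<delta>) kap"
    and E': "club_in lam E'"
  shows "\<exists>E. club_in lam E \<and> E \<subseteq> E' \<and>
           (\<forall>E''. club_in lam E'' \<longrightarrow>
              stationary_in lam {\<delta>\<in>S. Drop (c \<delta>) E \<subseteq> E'' \<and>
                 osup (Drop (c \<delta>) E) = \<delta> \<and> has_otp (Drop (c \<delta>) E) kap})"
proof (rule ccontr)
  let ?P = "\<lambda>E K \<delta>. Drop (c \<delta>) E \<subseteq> K \<and> osup (Drop (c \<delta>) E) = \<delta> \<and> has_otp (Drop (c \<delta>) E) kap"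
  assume no_club: "\<not> ?thesis"
  have "\<exists>K. club_in lam K \<and> (\<forall>\<delta>\<in>S \<inter> K. \<not> ?P E K \<delta>)" if E: "club_in lam E" "E \<subseteq> E'" for E
  proof -
    obtain E'' where E'': "club_in lam E''" "\<not> stationary_in lam {\<delta>\<in>S. ?P E E'' \<delta>}"
      using no_club E by blast
    moreover have "{\<delta>\<in>S. ?P E E'' \<delta>} \<subseteq> {..<lam}" using S(1) by auto
    ultimately obtain C where C: "club_in lam C" "{\<delta>\<in>S. ?P E E'' \<delta>} \<inter> C = {}"
      unfolding stationary_in_def by blast
    \<comment> \<open>shrinking E'' to C \<inter> E'' keeps every failure, since ?P E K \<delta> is monotone in K\<close>
    have "\<forall>\<delta>\<in>S \<inter> (C \<inter> E''). \<not> ?P E (C \<inter> E'') \<delta>" using C(2) by blast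
    then show ?thesis using club_in_Int[OF C(1) E''(1)] by blast
  qed
  then obtain G where "\<And>E. club_in lam E \<Longrightarrow> E \<subseteq> E' \<Longrightarrow>
      club_in lam (G E) \<and> (\<forall>\<delta>\<in>S \<inter> G E. \<not> ?P E (G E) \<delta>)"
    by metis
  then show False by (rule no_refuting_club_strategy[OF kap S c E'])
qed

end

theorem mainTheorem2:
  fixes kap lam :: "'a::wellorder"
    and S E' :: "'a set"
    and c :: "'a \<Rightarrow> 'a set"
  assumes "regular_cardinal kap" and "regular_cardinal lam"
    and "\<exists>\<mu><lam. {..<kap} \<prec> {..<\<mu>}"
    and "S \<subseteq> {\<delta>. \<delta> < lam \<and> cf \<delta> = kap}"
    and "stationary_in lam S"
    and "\<forall>\<delta>\<in>S. club_in \<delta> (c \<delta>) \<and> has_otp (c \<delta>) kap"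
    and "club_in lam E'"
  shows "\<exists>E. club_in lam E \<and> E \<subseteq> E' \<and>
           (\<forall>\<delta>\<in>S. closed_in_ord \<delta> (Drop (c \<delta>) E)) \<and>
           (\<forall>E''. club_in lam E'' \<longrightarrow>
              stationary_in lam {\<delta>\<in>S. Drop (c \<delta>) E \<subseteq> E'' \<and>
                 osup (Drop (c \<delta>) E) = \<delta> \<and> has_otp (Drop (c \<delta>) E) kap})"
proof -
  have kap: "infinite {..<kap}" using assms(1) unfolding regular_cardinal_def by blast
  obtain m where m: "m < lam" "{..<kap} \<prec> {..<m}" using assms(3) by blast
  have "kap < lam" using less_of_lesspoll_lessThan[OF m(2)] m(1) by (rule less_trans)
  then interpret uncountable_regular lam
    using assms(2) kap unfolding regular_cardinal_def by unfold_locales blast+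
  have "closed_in_ord \<delta> (Drop (c \<delta>) E)" if \<delta>: "\<delta> \<in> S" for \<delta> E
  proof -
    have "cf \<delta> = kap" "club_in \<delta> (c \<delta>)" using assms(4,6) \<delta> by auto
    moreover have "\<forall>x<\<delta>. \<exists>y<\<delta>. x < y" using limit_of_infinite_cf \<open>cf \<delta> = kap\<close> kap by blast
    ultimately show ?thesis using closed_in_ord_Drop by blast
  qed
  moreover obtain E where "club_in lam E \<and> E \<subseteq> E' \<and>
      (\<forall>E''. club_in lam E'' \<longrightarrow> stationary_in lam {\<delta>\<in>S. Drop (c \<delta>) E \<subseteq> E'' \<and>
          osup (Drop (c \<delta>) E) = \<delta> \<and> has_otp (Drop (c \<delta>) E) kap})"
    using exists_club_Drop_guessing[OF kap m(2,1) assms(4,5,6,7)] by blast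
  ultimately show ?thesis by blast
qed

end
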